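(* Let $({\mathbf\Lambda}^\star,{\mathbf V}^\star)$, with ${\mathbf\Lambda}^\star,{\mathbf V}^\star\ge 0$ entrywise, be a minimizer of $F$ over the set of pairs of entrywise nonnegative $(2L+1)\times K$ matrices. Then the entropic-regularized fair problem $$\min_{\pi}\Big\{\mathcal R_\beta(\pi)\;:\;\pi \text{ supported on the grid},\ \mathcal U_s(\pi,\ell)\le \epsilon_s \ \text{for all } \ell\in[\![L]\!],\,s\in[K]\Big\}$$ admits the solution $\pi_{{\mathbf\Lambda}^\star,{\mathbf V}^\star}$.
   Context: Let $K\ge 2$, $d\ge1$, and let $(X,S,Y)$ be a random triple with values in $\mathbb R^d\times[K]\times\mathbb R$, $\mathbb E[Y^2]<\infty$. Put $\eta(x)=\mathbb E[Y\mid X=x]$, $p_s=\mathbb P(S=s)>0$ for all $s\in[K]$, $\tau_s(x)=\mathbb P(S=s\mid X=x)$, $t_s(x)=1-\tau_s(x)/p_s$ and $\mathbf t(x)=(t_s(x))_{s\in[K]}$. Fix $B>0$, $L\in\mathbb N$, $\beta>0$ and $\boldsymbol\epsilon=(\epsilon_s)_{s\in[K]}\in[0,1]^K$. Write $[\![L]\!]=\{-L,\dots,L\}$ and $r_\ell(x)=(\eta(x)-\ell B/L)^2$. A randomized prediction $\pi$ is a Markov kernel from $\mathbb R^d$ to $\mathbb R$; it is supported on the grid if each $\pi(\cdot\mid x)$ is concentrated on $\{\ell B/L:\ell\in[\![L]\!]\}$, and then $\pi(\ell\mid x)$ denotes the mass at $\ell B/L$. Risk: $\mathcal R(\pi)=\mathbb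 E\big[\int(\hat y-\eta(X))^2\pi(d\hat y\mid X)\big]$. Negative entropy of a discrete distribution $\mu$: $\Psi(\mu)=\sum_{y}\mu(y)\log\mu(y)$ (with $0\log0=0$), and $\mathcal R_\beta(\pi)=\mathcal R(\pi)+\beta^{-1}\mathbb E[\Psi(\pi(\cdot\mid X))]$. Unfairness: $\mathcal U_s(\pi,\ell)=\big|\mathbb E[\pi(\ell\mid X)\mid S=s]-\mathbb E[\pi(\ell\mid X)]\big|$. For $\mathbf w\in\mathbb R^m$: $\mathrm{LSE}_\beta(\mathbf w)=\beta^{-1}\log\sum_{j}e^{\beta w_j}$ and softmax $\sigma_j(\mathbf w)=e^{w_j}/\sum_i e^{w_i}$. For matrices ${\mathbf\Lambda}=(\lambda_{\ell s}),{\mathbf V}=(\nu_{\ell s})$ indexed by $\ell\in[\![L]\!],s\in[K]$, let $\boldsymbol\lambda_\ell=(\lambda_{\ell s})_s$, $\boldsymbol\nu_\ell=(\nu_{\ell s})_s$, $$F({\mathbf\Lambda},{\mathbf V})=\mathbb E\Big[\mathrm{LSE}_\beta\Big(\big(\langle\boldsymbol\lambda_\ell-\boldsymbol\nu_\ell,\mathbf t(X)\rangle-r_\ell(X)\big)_{\ell\in[\![L]\!]}\Big)\Big]+\sum_{\ell\in[\![L]\!]}\langle\boldsymbol\lambda_\ell+\boldsymbol\nu_\ell,\boldsymbol\epsilon\rangle,$$ and $\pi_{{\mathbf\Lambda},{\mathbf V}}(\ell\mid x)=\sigma_\ell\Big(\beta\big(\langle\boldsymbol\lambda_{\ell'}-\boldsymbol\nu_{\ell'},\mathbf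 t(x)\rangle-r_{\ell'}(x)\big)_{\ell'\in[\![L]\!]}\Big)$ (a prediction supported on the grid). *)

theory Defs
  imports "HOL-Probability.Probability"
begin

text \<open>Index conventions: the grid index is l in {-L..L} (type int), sensitive
attribute values s in {1..K} (type nat). Features take values in real^'d.\<close>

definition grid_idx :: "nat \<Rightarrow> int set" where
  "grid_idx L = {- int L .. int L}"

definition grid_pt :: "real \<Rightarrow> nat \<Rightarrow> int \<Rightarrow> real" where
  "grid_pt B L l = real_of_int l * B / real L"

definition is_cond_exp_fun ::
  "'a measure \<Rightarrow> ('a \<Rightarrow> 'x::topological_space) \<Rightarrow> ('a \<Rightarrow> real) \<Rightarrow> ('x \<Rightarrow> real) \<Rightarrow> bool" where
  "is_cond_exp_fun M X Y g \<longleftrightarrow>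
     g \<in> borel_measurable borel \<and> integrable M (\<lambda>\<omega>. g (X \<omega>)) \<and>
     (\<forall>A \<in> sets borel. (\<integral>\<omega>. indicator A (X \<omega>) * Y \<omega> \<partial>M) =
                         (\<integral>\<omega>. indicator A (X \<omega>) * g (X \<omega>) \<partial>M))"

definition pS :: "'a measure \<Rightarrow> ('a \<Rightarrow> nat) \<Rightarrow> nat \<Rightarrow> real" where
  "pS M S s = measure M {\<omega> \<in> space M. S \<omega> = s}"

definition tfun :: "'a measure \<Rightarrow> ('a \<Rightarrow> nat) \<Rightarrow> (nat \<Rightarrow> 'x \<Rightarrow> real) \<Rightarrow> nat \<Rightarrow> 'x \<Rightarrow> real" where
  "tfun M S \<tau> s x = 1 - \<tau> s x / pS M S s"

definition rfun :: "('x \<Rightarrow> real) \<Rightarrow> real \<Rightarrow> nat \<Rightarrow> int \<Rightarrow> 'x \<Rightarrow> real" where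
  "rfun \<eta> B L l x = (\<eta> x - grid_pt B L l)\<^sup>2"

text \<open>Randomized prediction supported on the grid: pi x l is the mass at l*B/L.\<close>
definition grid_prediction :: "nat \<Rightarrow> ('x::topological_space \<Rightarrow> int \<Rightarrow> real) \<Rightarrow> bool" where
  "grid_prediction L \<pi> \<longleftrightarrow>
     (\<forall>x l. 0 \<le> \<pi> x l) \<and> (\<forall>x l. l \<notin> grid_idx L \<longrightarrow> \<pi> x l = 0) \<and>
     (\<forall>x. (\<Sum>l\<in>grid_idx L. \<pi> x l) = 1) \<and>
     (\<forall>l. (\<lambda>x. \<pi> x l) \<in> borel_measurable borel)"

definition risk ::
  "'a measure \<Rightarrow> ('a \<Rightarrow> 'x) \<Rightarrow> ('x \<Rightarrow> real) \<Rightarrow> real \<Rightarrow> nat \<Rightarrow> ('x \<Rightarrow> int \<Rightarrow> real) \<Rightarrow> real" where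
  "risk M X \<eta> B L \<pi> = (\<integral>\<omega>. (\<Sum>l\<in>grid_idx L. \<pi> (X \<omega>) l * rfun \<eta> B L l (X \<omega>)) \<partial>M)"

definition negent :: "nat \<Rightarrow> (int \<Rightarrow> real) \<Rightarrow> real" where
  "negent L \<mu> = (\<Sum>l\<in>grid_idx L. if \<mu> l = 0 then 0 else \<mu> l * ln (\<mu> l))"

definition risk_beta ::
  "'a measure \<Rightarrow> ('a \<Rightarrow> 'x) \<Rightarrow> ('x \<Rightarrow> real) \<Rightarrow> real \<Rightarrow> nat \<Rightarrow> real \<Rightarrow> ('x \<Rightarrow> int \<Rightarrow> real) \<Rightarrow> real" where
  "risk_beta M X \<eta> B L \<beta> \<pi> =
     risk M X \<eta> B L \<pi> + (1 / \<beta>) * (\<integral>\<omega>. negent L (\<pi> (X \<omega>)) \<partial>M)"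

definition unfair ::
  "'a measure \<Rightarrow> ('a \<Rightarrow> 'x) \<Rightarrow> ('a \<Rightarrow> nat) \<Rightarrow> ('x \<Rightarrow> int \<Rightarrow> real) \<Rightarrow> int \<Rightarrow> nat \<Rightarrow> real" where
  "unfair M X S \<pi> l s =
     \<bar>(\<integral>\<omega>. \<pi> (X \<omega>) l * indicator {\<omega>. S \<omega> = s} \<omega> \<partial>M) / pS M S s - (\<integral>\<omega>. \<pi> (X \<omega>) l \<partial>M)\<bar>"

definition LSE :: "real \<Rightarrow> 'i set \<Rightarrow> ('i \<Rightarrow> real) \<Rightarrow> real" where
  "LSE \<beta> I w = (1 / \<beta>) * ln (\<Sum>j\<in>I. exp (\<beta> * w j))"

definition score ::
  "'a measure \<Rightarrow> ('a \<Rightarrow> nat) \<Rightarrow> (nat \<Rightarrow> 'x \<Rightarrow> real) \<Rightarrow> ('x \<Rightarrow> real) \<Rightarrow> real \<Rightarrow> nat \<Rightarrow> nat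
    \<Rightarrow> (int \<Rightarrow> nat \<Rightarrow> real) \<Rightarrow> (int \<Rightarrow> nat \<Rightarrow> real) \<Rightarrow> int \<Rightarrow> 'x \<Rightarrow> real" where
  "score M S \<tau> \<eta> B L K \<Lambda> V l x =
     (\<Sum>s\<in>{1..K}. (\<Lambda> l s - V l s) * tfun M S \<tau> s x) - rfun \<eta> B L l x"

definition Fobj ::
  "'a measure \<Rightarrow> ('a \<Rightarrow> 'x) \<Rightarrow> ('a \<Rightarrow> nat) \<Rightarrow> (nat \<Rightarrow> 'x \<Rightarrow> real) \<Rightarrow> ('x \<Rightarrow> real) \<Rightarrow> real \<Rightarrow> nat
    \<Rightarrow> nat \<Rightarrow> real \<Rightarrow> (nat \<Rightarrow> real) \<Rightarrow> (int \<Rightarrow> nat \<Rightarrow> real) \<Rightarrow> (int \<Rightarrow> nat \<Rightarrow> real) \<Rightarrow> real" where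
  "Fobj M X S \<tau> \<eta> B L K \<beta> \<epsilon> \<Lambda> V =
     (\<integral>\<omega>. LSE \<beta> (grid_idx L) (\<lambda>l. score M S \<tau> \<eta> B L K \<Lambda> V l (X \<omega>)) \<partial>M) +
     (\<Sum>l\<in>grid_idx L. \<Sum>s\<in>{1..K}. (\<Lambda> l s + V l s) * \<epsilon> s)"

definition pi_LV ::
  "'a measure \<Rightarrow> ('a \<Rightarrow> nat) \<Rightarrow> (nat \<Rightarrow> 'x \<Rightarrow> real) \<Rightarrow> ('x \<Rightarrow> real) \<Rightarrow> real \<Rightarrow> nat \<Rightarrow> nat
    \<Rightarrow> real \<Rightarrow> (int \<Rightarrow> nat \<Rightarrow> real) \<Rightarrow> (int \<Rightarrow> nat \<Rightarrow> real) \<Rightarrow> 'x \<Rightarrow> int \<Rightarrow> real" where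
  "pi_LV M S \<tau> \<eta> B L K \<beta> \<Lambda> V x l =
     (if l \<in> grid_idx L then
        exp (\<beta> * score M S \<tau> \<eta> B L K \<Lambda> V l x) /
        (\<Sum>l'\<in>grid_idx L. exp (\<beta> * score M S \<tau> \<eta> B L K \<Lambda> V l' x))
      else 0)"

definition nonneg_mat :: "nat \<Rightarrow> nat \<Rightarrow> (int \<Rightarrow> nat \<Rightarrow> real) \<Rightarrow> bool" where
  "nonneg_mat L K \<Lambda> \<longleftrightarrow> (\<forall>l\<in>grid_idx L. \<forall>s\<in>{1..K}. 0 \<le> \<Lambda> l s)"

definition fair_feasible ::
  "'a measure \<Rightarrow> ('a \<Rightarrow> 'x::topological_space) \<Rightarrow> ('a \<Rightarrow> nat) \<Rightarrow> nat \<Rightarrow> nat \<Rightarrow> (nat \<Rightarrow> real)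
    \<Rightarrow> ('x \<Rightarrow> int \<Rightarrow> real) \<Rightarrow> bool" where
  "fair_feasible M X S L K \<epsilon> \<pi> \<longleftrightarrow>
     grid_prediction L \<pi> \<and> (\<forall>l\<in>grid_idx L. \<forall>s\<in>{1..K}. unfair M X S \<pi> l s \<le> \<epsilon> s)"

end

theory Submission
  imports Defs
begin

text \<open>
  Lagrangian duality for the fairness constraints. For a grid prediction \<open>\<pi>\<close> put
  \<open>I\<^sub>\<pi>(l, s) = E[\<pi>(l|X) t\<^sub>s(X)]\<close>, so that \<open>U\<^sub>s(\<pi>, l) = |I\<^sub>\<pi>(l, s)|\<close>. For multipliers \<open>\<Lambda>, V \<ge> 0\<close>
  with score \<open>w\<close>, the regularised risk is \<open>\<Sum>\<^sub>l\<^sub>,\<^sub>s (\<lambda>\<^sub>l\<^sub>s - \<nu>\<^sub>l\<^sub>s) I\<^sub>\<pi>(l, s) - E[\<langle>\<pi>(X), w(X)\<rangle> + H(\<pi>(X))/\<beta>]\<close>.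
  By Gibbs' variational principle the expectation is at most \<open>E[LSE\<^sub>\<beta>(w(X))]\<close>, with equality for
  the softmax prediction \<open>pi_LV \<Lambda> V\<close>; for a feasible \<open>\<pi>\<close> the sum is at least
  \<open>-\<Sum>\<^sub>l\<^sub>,\<^sub>s (\<lambda>\<^sub>l\<^sub>s + \<nu>\<^sub>l\<^sub>s) \<epsilon>\<^sub>s\<close>. Hence \<open>R\<^sub>\<beta>(\<pi>) \<ge> -F(\<Lambda>, V)\<close> (weak duality).
  At a minimiser of \<open>F\<close>, perturbing a single multiplier and bounding the change of \<open>LSE\<^sub>\<beta>\<close> to
  second order gives the KKT conditions \<open>|I(l, s)| \<le> \<epsilon>\<^sub>s\<close>, \<open>\<lambda>\<^sub>l\<^sub>s (\<epsilon>\<^sub>s + I(l, s)) = 0\<close>,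
  \<open>\<nu>\<^sub>l\<^sub>s (\<epsilon>\<^sub>s - I(l, s)) = 0\<close> for \<open>pi_LV \<Lambda> V\<close>. So it is feasible, and its risk is \<open>-F(\<Lambda>, V)\<close>.
\<close>

section \<open>Elementary real inequalities\<close>

lemma exp_le_one_plus_x_plus_square:
  fixes x :: real
  assumes "\<bar>x\<bar> \<le> 1"
  shows "exp x \<le> 1 + x + x\<^sup>2"
proof (cases "x \<ge> 0")
  case True
  then show ?thesis using exp_bound[of x] assms by auto
next
  case False
  define y where "y = - x"
  have y: "0 \<le> y" "y \<le> 1" using False assms y_def by auto
  \<comment> \<open>\<open>exp (-y) \<le> 1 - y + y\<^sup>2\<close> follows from \<open>(1 - y + y\<^sup>2) (1 + y + y\<^sup>2/2) \<ge> 1\<close>.\<close>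
  have "1 \<le> (1 - y + y\<^sup>2) * (1 + y + y\<^sup>2 / 2)"
  proof -
    have "(1 - y + y\<^sup>2) * (1 + y + y\<^sup>2 / 2) = 1 + (y\<^sup>2 + y ^ 3 + y ^ 4) / 2"
      by (simp add: field_simps power2_eq_square power3_eq_cube power4_eq_xxxx)
    then show ?thesis using y by simp
  qed
  also have "\<dots> \<le> (1 - y + y\<^sup>2) * exp y"
  proof (rule mult_left_mono)
    show "1 + y + y\<^sup>2 / 2 \<le> exp y" using exp_lower_Taylor_quadratic[OF y(1)] .
    show "0 \<le> 1 - y + y\<^sup>2" using y by (simp add: power2_eq_square)
  qed
  finally have "exp (- y) \<le> 1 - y + y\<^sup>2" by (simp add: exp_minus field_simps)
  then show ?thesis using y_def by simp
qed

lemma nonneg_of_quadratic_perturbation: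
  fixes a D \<delta> :: real
  assumes "\<delta> > 0" "D \<ge> 0" and perturb: "\<And>h. 0 < h \<Longrightarrow> h \<le> \<delta> \<Longrightarrow> 0 \<le> h * a + h\<^sup>2 * D"
  shows "a \<ge> 0"
proof (rule ccontr)
  assume "\<not> a \<ge> 0"
  define h where "h = min \<delta> (- a / (D + 1))"
  have h: "0 < h" "h \<le> \<delta>" "h \<le> - a / (D + 1)"
    using \<open>\<not> a \<ge> 0\<close> assms(1,2) unfolding h_def by (auto simp: divide_neg_pos)
  have "h * D \<le> - a / (D + 1) * D" using h assms(2) by (intro mult_right_mono) auto
  also have "\<dots> < - a" using \<open>\<not> a \<ge> 0\<close> assms(2) by (simp add: field_simps)
  finally have neg: "a + h * D < 0" by linarith
  have "h * a + h\<^sup>2 * D < 0"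
    using mult_pos_neg[OF h(1) neg] by (simp add: power2_eq_square algebra_simps)
  with perturb[OF h(1,2)] show False by linarith
qed

text \<open>First-order conditions for minimising over \<open>[x - m, \<infinity>)\<close> at the point \<open>x\<close>, when the
  objective grows at most by \<open>h a + h\<^sup>2 D\<close> under a shift by \<open>h\<close>.\<close>
lemma complementary_slackness_of_quadratic_perturbation:
  fixes a D \<delta> m :: real
  assumes "\<delta> > 0" "D \<ge> 0" "m \<ge> 0"
    and perturb: "\<And>h. \<bar>h\<bar> \<le> \<delta> \<Longrightarrow> - m \<le> h \<Longrightarrow> 0 \<le> h * a + h\<^sup>2 * D"
  shows "a \<ge> 0 \<and> m * a = 0"
proof -
  have "a \<ge> 0"
  proof (rule nonneg_of_quadratic_perturbation[OF assms(1,2)])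
    fix h :: real assume "0 < h" "h \<le> \<delta>"
    then show "0 \<le> h * a + h\<^sup>2 * D" using assms(3) by (intro perturb) auto
  qed
  moreover have "- a \<ge> 0" if "m > 0"
  proof (rule nonneg_of_quadratic_perturbation[of "min \<delta> m"])
    fix h :: real assume "0 < h" "h \<le> min \<delta> m"
    then have "0 \<le> (- h) * a + (- h)\<^sup>2 * D" by (intro perturb) auto
    then show "0 \<le> h * - a + h\<^sup>2 * D" by simp
  qed (use that assms in auto)
  ultimately show ?thesis using assms(3) by (cases "m > 0") auto
qed

section \<open>Log-sum-exp, softmax and Gibbs' variational principle\<close>

definition softmax :: "real \<Rightarrow> 'i set \<Rightarrow> ('i \<Rightarrow> real) \<Rightarrow> 'i \<Rightarrow> real" where
  "softmax \<beta> I w j = exp (\<beta> * w j) / (\<Sum>i\<in>I. exp (\<beta> * w i))"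

text \<open>Entropy-regularised expected score of the distribution \<open>p\<close>; \<open>LSE\<close> is its maximum
  (Gibbs' variational principle), attained at \<open>softmax\<close>.\<close>
definition entropic_value :: "real \<Rightarrow> 'i set \<Rightarrow> ('i \<Rightarrow> real) \<Rightarrow> ('i \<Rightarrow> real) \<Rightarrow> real" where
  "entropic_value \<beta> I w p =
     (\<Sum>i\<in>I. p i * w i) - (\<Sum>i\<in>I. if p i = 0 then 0 else p i * ln (p i)) / \<beta>"

lemma sum_exp_pos: "finite I \<Longrightarrow> I \<noteq> {} \<Longrightarrow> 0 < (\<Sum>i\<in>I. exp (f i :: real))"
  by (intro sum_pos) auto

lemma softmax_pos: "finite I \<Longrightarrow> I \<noteq> {} \<Longrightarrow> 0 < softmax \<beta> I w j"
  unfolding softmax_def using sum_exp_pos[of I "\<lambda>i. \<beta> * w i"] by simp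

lemma softmax_le_1: "finite I \<Longrightarrow> j \<in> I \<Longrightarrow> softmax \<beta> I w j \<le> 1"
  unfolding softmax_def using sum_exp_pos[of I "\<lambda>i. \<beta> * w i"]
  by (subst divide_le_eq_1_pos) (auto intro: member_le_sum)

lemma sum_softmax: "finite I \<Longrightarrow> I \<noteq> {} \<Longrightarrow> (\<Sum>j\<in>I. softmax \<beta> I w j) = 1"
  unfolding softmax_def using sum_exp_pos[of I "\<lambda>i. \<beta> * w i"]
  by (simp add: sum_divide_distrib[symmetric])

lemma ln_softmax:
  "finite I \<Longrightarrow> I \<noteq> {} \<Longrightarrow> \<beta> \<noteq> 0 \<Longrightarrow> ln (softmax \<beta> I w j) = \<beta> * w j - \<beta> * LSE \<beta> I w"
  unfolding softmax_def LSE_def using sum_exp_pos[of I "\<lambda>i. \<beta> * w i"] by (simp add: ln_div)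

lemma entropic_value_le_LSE:
  fixes w p :: "'i \<Rightarrow> real"
  assumes I: "finite I" and \<beta>: "\<beta> > 0"
    and p: "\<And>i. i \<in> I \<Longrightarrow> 0 \<le> p i" "(\<Sum>i\<in>I. p i) = 1"
  shows "entropic_value \<beta> I w p \<le> LSE \<beta> I w"
proof -
  have "I \<noteq> {}" using p(2) by auto
  define \<sigma> where "\<sigma> = softmax \<beta> I w"
  have \<sigma>: "\<And>i. 0 < \<sigma> i" "(\<Sum>i\<in>I. \<sigma> i) = 1"
    unfolding \<sigma>_def using softmax_pos[OF I \<open>I \<noteq> {}\<close>] sum_softmax[OF I \<open>I \<noteq> {}\<close>] by auto
  \<comment> \<open>Termwise \<open>p ln (p / \<sigma>) \<ge> p - \<sigma>\<close>, i.e. \<open>ln x \<le> x - 1\<close> at \<open>x = \<sigma> / p\<close>.\<close>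
  have pointwise: "p i - \<sigma> i \<le> (if p i = 0 then 0 else p i * ln (p i)) - p i * (\<beta> * w i - \<beta> * LSE \<beta> I w)"
    if "i \<in> I" for i
  proof (cases "p i = 0")
    case False
    then have "p i > 0" using p(1)[OF that] by simp
    have "p i * ln (\<sigma> i / p i) \<le> p i * (\<sigma> i / p i - 1)"
      using \<open>p i > 0\<close> \<sigma>(1)[of i] by (intro mult_left_mono ln_le_minus_one) auto
    moreover have "ln (\<sigma> i) = \<beta> * w i - \<beta> * LSE \<beta> I w"
      using ln_softmax[OF I \<open>I \<noteq> {}\<close>] \<beta> unfolding \<sigma>_def by simp
    ultimately show ?thesis
      using False \<open>p i > 0\<close> \<sigma>(1)[of i] by (simp add: ln_div algebra_simps)
  qed (use \<sigma>(1)[of i] in simp)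
  have "0 = (\<Sum>i\<in>I. p i - \<sigma> i)" using p(2) \<sigma>(2) by (simp add: sum_subtractf)
  also have "\<dots> \<le> (\<Sum>i\<in>I. (if p i = 0 then 0 else p i * ln (p i)) - p i * (\<beta> * w i - \<beta> * LSE \<beta> I w))"
    using pointwise by (rule sum_mono)
  also have "\<dots> = (\<Sum>i\<in>I. if p i = 0 then 0 else p i * ln (p i))
      - \<beta> * (\<Sum>i\<in>I. p i * w i) + \<beta> * LSE \<beta> I w * (\<Sum>i\<in>I. p i)"
    by (simp add: algebra_simps sum.distrib sum_subtractf sum_distrib_left sum_distrib_right)
  also have "\<dots> = \<beta> * (LSE \<beta> I w - entropic_value \<beta> I w p)"
    using \<beta> p(2) unfolding entropic_value_def by (simp add: field_simps)
  finally show ?thesis using \<beta> by (simp add: zero_le_mult_iff)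
qed

lemma entropic_value_softmax:
  assumes I: "finite I" "I \<noteq> {}" and \<beta>: "\<beta> > 0"
  shows "entropic_value \<beta> I w (softmax \<beta> I w) = LSE \<beta> I w"
proof -
  define \<sigma> where "\<sigma> = softmax \<beta> I w"
  have "(\<Sum>i\<in>I. if \<sigma> i = 0 then 0 else \<sigma> i * ln (\<sigma> i))
      = (\<Sum>i\<in>I. \<beta> * (\<sigma> i * w i) - \<sigma> i * (\<beta> * LSE \<beta> I w))"
  proof (intro sum.cong refl)
    fix i
    have "\<sigma> i \<noteq> 0" using softmax_pos[OF I] unfolding \<sigma>_def by (metis less_irrefl)
    moreover have ln_\<sigma>: "ln (\<sigma> i) = \<beta> * w i - \<beta> * LSE \<beta> I w"
      using ln_softmax[OF I] \<beta> unfolding \<sigma>_def by simp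
    ultimately show "(if \<sigma> i = 0 then 0 else \<sigma> i * ln (\<sigma> i))
        = \<beta> * (\<sigma> i * w i) - \<sigma> i * (\<beta> * LSE \<beta> I w)"
      by (simp only: if_False ln_\<sigma>) (simp add: algebra_simps)
  qed
  also have "\<dots> = \<beta> * (\<Sum>i\<in>I. \<sigma> i * w i) - \<beta> * LSE \<beta> I w"
    using sum_softmax[OF I] unfolding \<sigma>_def
    by (simp add: sum_subtractf sum_distrib_left sum_distrib_right[symmetric])
  finally show ?thesis using \<beta> unfolding entropic_value_def \<sigma>_def by (simp add: field_simps)
qed

lemma LSE_perturb_le:
  fixes w :: "'i \<Rightarrow> real"
  assumes I: "finite I" "j \<in> I" and \<beta>: "\<beta> > 0" and a: "\<bar>\<beta> * a\<bar> \<le> 1"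
  shows "LSE \<beta> I (\<lambda>i. w i + (if i = j then a else 0))
    \<le> LSE \<beta> I w + softmax \<beta> I w j * a + \<beta> * a\<^sup>2"
proof -
  have "I \<noteq> {}" using I by auto
  define Z where "Z = (\<Sum>i\<in>I. exp (\<beta> * w i))"
  define \<sigma> where "\<sigma> = softmax \<beta> I w j"
  define e where "e = exp (\<beta> * a) - 1"
  have Z: "Z > 0" unfolding Z_def using sum_exp_pos[OF I(1) \<open>I \<noteq> {}\<close>] .
  have \<sigma>: "0 < \<sigma>" "\<sigma> \<le> 1" unfolding \<sigma>_def using softmax_pos[OF I(1) \<open>I \<noteq> {}\<close>] softmax_le_1[OF I] by auto
  have "(\<Sum>i\<in>I. exp (\<beta> * (w i + (if i = j then a else 0))))
      = (\<Sum>i\<in>I. exp (\<beta> * w i) + (if i = j then exp (\<beta> * w j) * e else 0))"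
    by (intro sum.cong refl) (simp add: e_def distrib_left exp_add right_diff_distrib)
  also have "\<dots> = Z + exp (\<beta> * w j) * e"
    using I by (simp add: sum.distrib Z_def)
  also have "\<dots> = Z * (1 + \<sigma> * e)"
    using Z by (simp add: \<sigma>_def softmax_def Z_def[symmetric] field_simps)
  finally have sum_eq: "(\<Sum>i\<in>I. exp (\<beta> * (w i + (if i = j then a else 0)))) = Z * (1 + \<sigma> * e)" .
  have pos: "1 + \<sigma> * e > 0"
  proof -
    have "1 + \<sigma> * e = (1 - \<sigma>) + \<sigma> * exp (\<beta> * a)" by (simp add: e_def algebra_simps)
    moreover have "\<sigma> * exp (\<beta> * a) > 0" using \<sigma> by simp
    ultimately show ?thesis using \<sigma> by linarith
  qed
  have "ln (1 + \<sigma> * e) \<le> \<sigma> * e"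
    using ln_le_minus_one[OF pos] by simp
  also have "\<dots> \<le> \<sigma> * (\<beta> * a + (\<beta> * a)\<^sup>2)"
    using exp_le_one_plus_x_plus_square[OF a] \<sigma> unfolding e_def by (intro mult_left_mono) auto
  also have "\<dots> \<le> \<sigma> * (\<beta> * a) + (\<beta> * a)\<^sup>2"
    using \<sigma> mult_left_le_one_le[of "(\<beta> * a)\<^sup>2" \<sigma>] by (simp add: distrib_left)
  finally have ln_le: "ln (1 + \<sigma> * e) \<le> \<sigma> * (\<beta> * a) + (\<beta> * a)\<^sup>2" .
  have "LSE \<beta> I (\<lambda>i. w i + (if i = j then a else 0)) = LSE \<beta> I w + ln (1 + \<sigma> * e) / \<beta>"
    unfolding LSE_def sum_eq Z_def[symmetric] using Z pos by (simp add: ln_mult add_divide_distrib)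
  also have "\<dots> \<le> LSE \<beta> I w + (\<sigma> * (\<beta> * a) + (\<beta> * a)\<^sup>2) / \<beta>"
    using ln_le \<beta> by (simp add: divide_right_mono)
  also have "\<dots> = LSE \<beta> I w + \<sigma> * a + \<beta> * a\<^sup>2"
    using \<beta> by (simp add: power2_eq_square field_simps)
  finally show ?thesis unfolding \<sigma>_def .
qed

lemma abs_LSE_le:
  fixes w :: "'i \<Rightarrow> real"
  assumes I: "finite I" "I \<noteq> {}" and \<beta>: "\<beta> > 0"
  shows "\<bar>LSE \<beta> I w\<bar> \<le> (\<Sum>i\<in>I. \<bar>w i\<bar>) + ln (card I) / \<beta>"
proof -
  define m where "m = (\<Sum>i\<in>I. \<bar>w i\<bar>)"
  define Z where "Z = (\<Sum>i\<in>I. exp (\<beta> * w i))"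
  have w: "- (\<beta> * m) \<le> \<beta> * w i \<and> \<beta> * w i \<le> \<beta> * m" if "i \<in> I" for i
  proof -
    have "\<bar>w i\<bar> \<le> m" unfolding m_def using I(1) that by (intro member_le_sum) auto
    then have "\<beta> * - w i \<le> \<beta> * m" "\<beta> * w i \<le> \<beta> * m"
      using \<beta> mult_left_mono[of "- w i" m \<beta>] mult_left_mono[of "w i" m \<beta>] by (auto simp: abs_le_iff)
    then show ?thesis by simp
  qed
  obtain j where "j \<in> I" using I by auto
  have "exp (- (\<beta> * m)) \<le> exp (\<beta> * w j)" using w[OF \<open>j \<in> I\<close>] by simp
  also have "\<dots> \<le> Z" unfolding Z_def using I \<open>j \<in> I\<close> by (intro member_le_sum) auto
  finally have Z_lower: "exp (- (\<beta> * m)) \<le> Z" .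
  have "Z \<le> (\<Sum>i\<in>I. exp (\<beta> * m))" unfolding Z_def using w by (intro sum_mono) simp
  then have Z_upper: "Z \<le> card I * exp (\<beta> * m)" by simp
  have "Z > 0" using Z_lower exp_gt_zero by (rule order.strict_trans2[rotated])
  have "card I > 0" using I by (simp add: card_gt_0_iff)
  have "- (\<beta> * m) \<le> ln Z"
    using ln_le_cancel_iff[of "exp (- (\<beta> * m))" Z] Z_lower \<open>Z > 0\<close> by simp
  moreover have "ln Z \<le> ln (card I) + \<beta> * m"
    using ln_le_cancel_iff[of Z "card I * exp (\<beta> * m)"] Z_upper \<open>Z > 0\<close> \<open>card I > 0\<close>
    by (simp add: ln_mult)
  moreover have "ln (card I) \<ge> 0" using \<open>card I > 0\<close> by simp
  ultimately show ?thesis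
    using \<beta> unfolding LSE_def Z_def[symmetric] m_def[symmetric] by (simp add: abs_le_iff field_simps)
qed

lemma (in finite_measure) integrable_LSE:
  fixes w :: "'i \<Rightarrow> 'a \<Rightarrow> real"
  assumes I: "finite I" "I \<noteq> {}" and \<beta>: "\<beta> > 0" and w: "\<And>i. integrable M (w i)"
  shows "integrable M (\<lambda>x. LSE \<beta> I (\<lambda>i. w i x))"
proof (rule Bochner_Integration.integrable_bound)
  have [measurable]: "w i \<in> borel_measurable M" for i using w by auto
  show "integrable M (\<lambda>x. (\<Sum>i\<in>I. \<bar>w i x\<bar>) + ln (card I) / \<beta>)"
    using w by auto
  show "(\<lambda>x. LSE \<beta> I (\<lambda>i. w i x)) \<in> borel_measurable M"
    unfolding LSE_def by measurable
  show "AE x in M. norm (LSE \<beta> I (\<lambda>i. w i x)) \<le> norm ((\<Sum>i\<in>I. \<bar>w i x\<bar>) + ln (card I) / \<beta>)"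
    using abs_LSE_le[OF I \<beta>] by (auto intro!: AE_I2 order.trans[OF _ abs_ge_self])
qed

lemma (in prob_space) integral_LSE_perturb_le:
  fixes w :: "'i \<Rightarrow> 'a \<Rightarrow> real"
  assumes I: "finite I" "j \<in> I" and \<beta>: "\<beta> > 0"
    and w: "\<And>i. integrable M (w i)"
    and u [measurable]: "u \<in> borel_measurable M" and u_bound: "AE x in M. \<bar>u x\<bar> \<le> C"
    and c: "\<bar>c\<bar> * \<beta> * C \<le> 1"
  shows "(\<integral>x. LSE \<beta> I (\<lambda>i. w i x + (if i = j then c * u x else 0)) \<partial>M)
    \<le> (\<integral>x. LSE \<beta> I (\<lambda>i. w i x) \<partial>M)
      + c * (\<integral>x. softmax \<beta> I (\<lambda>i. w i x) j * u x \<partial>M) + \<beta> * C\<^sup>2 * c\<^sup>2"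
proof -
  have "I \<noteq> {}" using I by auto
  have [measurable]: "w i \<in> borel_measurable M" for i using w by auto
  have "AE x in M. 0 \<le> C" using u_bound by eventually_elim auto
  then have "C \<ge> 0" by simp
  have \<sigma>_bound: "0 \<le> softmax \<beta> I (\<lambda>i. w i x) j \<and> softmax \<beta> I (\<lambda>i. w i x) j \<le> 1" for x
    using softmax_pos[OF I(1) \<open>I \<noteq> {}\<close>] softmax_le_1[OF I] less_imp_le by blast
  have \<sigma>u: "integrable M (\<lambda>x. softmax \<beta> I (\<lambda>i. w i x) j * u x)"
  proof (rule integrable_const_bound[where B=C])
    show "AE x in M. norm (softmax \<beta> I (\<lambda>i. w i x) j * u x) \<le> C"
      using u_bound
    proof eventually_elim
      case (elim x)
      have "\<bar>softmax \<beta> I (\<lambda>i. w i x) j * u x\<bar> \<le> \<bar>u x\<bar>"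
        using \<sigma>_bound[of x] by (simp add: abs_mult mult_left_le_one_le)
      then show ?case using elim by simp
    qed
    show "(\<lambda>x. softmax \<beta> I (\<lambda>i. w i x) j * u x) \<in> borel_measurable M"
      unfolding softmax_def by measurable
  qed
  have u_int: "integrable M u" using u_bound by (intro integrable_const_bound[where B=C]) auto
  have "(\<integral>x. LSE \<beta> I (\<lambda>i. w i x + (if i = j then c * u x else 0)) \<partial>M)
      \<le> (\<integral>x. LSE \<beta> I (\<lambda>i. w i x) + c * (softmax \<beta> I (\<lambda>i. w i x) j * u x) + \<beta> * C\<^sup>2 * c\<^sup>2 \<partial>M)"
  proof (rule integral_mono_AE)
    show "integrable M (\<lambda>x. LSE \<beta> I (\<lambda>i. w i x + (if i = j then c * u x else 0)))"
    proof (rule integrable_LSE[OF I(1) \<open>I \<noteq> {}\<close> \<beta>])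
      show "integrable M (\<lambda>x. w i x + (if i = j then c * u x else 0))" for i
        using w u_int by (cases "i = j") auto
    qed
    show "integrable M (\<lambda>x. LSE \<beta> I (\<lambda>i. w i x) + c * (softmax \<beta> I (\<lambda>i. w i x) j * u x) + \<beta> * C\<^sup>2 * c\<^sup>2)"
      using integrable_LSE[OF I(1) \<open>I \<noteq> {}\<close> \<beta> w] \<sigma>u by auto
    show "AE x in M. LSE \<beta> I (\<lambda>i. w i x + (if i = j then c * u x else 0))
        \<le> LSE \<beta> I (\<lambda>i. w i x) + c * (softmax \<beta> I (\<lambda>i. w i x) j * u x) + \<beta> * C\<^sup>2 * c\<^sup>2"
      using u_bound
    proof eventually_elim
      case (elim x)
      have cu: "\<bar>c * u x\<bar> \<le> \<bar>c\<bar> * C" using elim by (simp add: abs_mult mult_left_mono)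
      have small: "\<bar>\<beta> * (c * u x)\<bar> \<le> 1"
      proof -
        have "\<bar>\<beta> * (c * u x)\<bar> \<le> \<beta> * (\<bar>c\<bar> * C)" using cu \<beta> by (simp add: abs_mult mult_left_mono)
        also have "\<dots> \<le> 1" using c by (simp add: mult_ac)
        finally show ?thesis .
      qed
      have "(c * u x)\<^sup>2 \<le> C\<^sup>2 * c\<^sup>2"
        using power_mono[OF cu abs_ge_zero, of 2] by (simp add: power_mult_distrib mult.commute)
      then have "\<beta> * (c * u x)\<^sup>2 \<le> \<beta> * C\<^sup>2 * c\<^sup>2"
        using \<beta> by (simp add: mult.assoc mult_left_mono)
      moreover have "softmax \<beta> I (\<lambda>i. w i x) j * (c * u x) = c * (softmax \<beta> I (\<lambda>i. w i x) j * u x)"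
        by simp
      ultimately show ?case
        using LSE_perturb_le[OF I \<beta> small, of "\<lambda>i. w i x"] by linarith
    qed
  qed
  also have "\<dots> = (\<integral>x. LSE \<beta> I (\<lambda>i. w i x) \<partial>M)
      + c * (\<integral>x. softmax \<beta> I (\<lambda>i. w i x) j * u x \<partial>M) + \<beta> * C\<^sup>2 * c\<^sup>2"
    using integrable_LSE[OF I(1) \<open>I \<noteq> {}\<close> \<beta> w] \<sigma>u by (simp add: prob_space)
  finally show ?thesis .
qed

section \<open>Conditional expectation given a random variable\<close>

lemma (in prob_space) finite_measure_subalgebra_vimage_algebra:
  assumes "X \<in> measurable M N"
  shows "finite_measure_subalgebra M (vimage_algebra (space M) X N)"
proof unfold_locales
  show "subalgebra M (vimage_algebra (space M) X N)"
    unfolding subalgebra_def using sets_image_in_sets[OF refl assms] by simp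
qed

lemma (in prob_space) is_cond_exp_fun_AE_real_cond_exp:
  fixes X :: "'a \<Rightarrow> 'x::topological_space"
  assumes X: "X \<in> borel_measurable M" and Z: "integrable M Z" and g: "is_cond_exp_fun M X Z g"
  shows "AE \<omega> in M. real_cond_exp M (vimage_algebra (space M) X borel) Z \<omega> = g (X \<omega>)"
proof -
  define F where "F = vimage_algebra (space M) X borel"
  interpret finite_measure_subalgebra M F
    unfolding F_def by (rule finite_measure_subalgebra_vimage_algebra[OF X])
  have g_meas: "g \<in> borel_measurable borel" and g_int: "integrable M (\<lambda>\<omega>. g (X \<omega>))"
    and g_eq: "\<And>A. A \<in> sets borel \<Longrightarrow>
      (\<integral>\<omega>. indicator A (X \<omega>) * Z \<omega> \<partial>M) = (\<integral>\<omega>. indicator A (X \<omega>) * g (X \<omega>) \<partial>M)"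
    using g unfolding is_cond_exp_fun_def by auto
  have "X \<in> measurable F borel" unfolding F_def by (rule measurable_vimage_algebra1) auto
  then have gX_meas: "(\<lambda>\<omega>. g (X \<omega>)) \<in> borel_measurable F" using g_meas by measurable
  have "AE \<omega> in M. real_cond_exp M F Z \<omega> = g (X \<omega>)"
  proof (rule real_cond_exp_charact[OF _ Z g_int gX_meas])
    fix A assume "A \<in> sets F"
    then obtain B where B: "B \<in> sets borel" "A = X -` B \<inter> space M"
      unfolding F_def by (subst (asm) sets_vimage_algebra2) auto
    then have ind: "\<And>\<omega>. \<omega> \<in> space M \<Longrightarrow> indicator A \<omega> = (indicator B (X \<omega>) :: real)"
      by (auto simp: indicator_def)
    have "(\<integral>\<omega>\<in>A. Z \<omega> \<partial>M) = (\<integral>\<omega>. indicator B (X \<omega>) * Z \<omega> \<partial>M)"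
      unfolding set_lebesgue_integral_def by (intro Bochner_Integration.integral_cong) (auto simp: ind)
    also have "\<dots> = (\<integral>\<omega>. indicator B (X \<omega>) * g (X \<omega>) \<partial>M)" using g_eq[OF B(1)] .
    also have "\<dots> = (\<integral>\<omega>\<in>A. g (X \<omega>) \<partial>M)"
      unfolding set_lebesgue_integral_def by (intro Bochner_Integration.integral_cong) (auto simp: ind)
    finally show "(\<integral>\<omega>\<in>A. Z \<omega> \<partial>M) = (\<integral>\<omega>\<in>A. g (X \<omega>) \<partial>M)" .
  qed
  then show ?thesis unfolding F_def .
qed

text \<open>The defining property of \<open>is_cond_exp_fun\<close> only tests indicators; via
  \<open>real_cond_exp\<close> it extends to all bounded measurable test functions.\<close>
lemma (in prob_space) integral_mult_is_cond_exp_fun: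
  fixes X :: "'a \<Rightarrow> 'x::topological_space"
  assumes X: "X \<in> borel_measurable M" and Z: "integrable M Z" and g: "is_cond_exp_fun M X Z g"
    and h: "h \<in> borel_measurable borel" and h_bound: "\<And>x. \<bar>h x\<bar> \<le> C"
  shows "(\<integral>\<omega>. h (X \<omega>) * Z \<omega> \<partial>M) = (\<integral>\<omega>. h (X \<omega>) * g (X \<omega>) \<partial>M)"
proof -
  define F where "F = vimage_algebra (space M) X borel"
  interpret finite_measure_subalgebra M F
    unfolding F_def by (rule finite_measure_subalgebra_vimage_algebra[OF X])
  have [measurable]: "Z \<in> borel_measurable M" using Z by auto
  have "X \<in> measurable F borel" unfolding F_def by (rule measurable_vimage_algebra1) auto
  then have hX_F: "(\<lambda>\<omega>. h (X \<omega>)) \<in> borel_measurable F" using h by measurable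
  have g_meas: "g \<in> borel_measurable borel" using g unfolding is_cond_exp_fun_def by auto
  have [measurable]: "(\<lambda>\<omega>. h (X \<omega>)) \<in> borel_measurable M" "(\<lambda>\<omega>. g (X \<omega>)) \<in> borel_measurable M"
    using X h g_meas by measurable
  have hZ: "integrable M (\<lambda>\<omega>. h (X \<omega>) * Z \<omega>)"
  proof (rule Bochner_Integration.integrable_bound[where f="\<lambda>\<omega>. C * Z \<omega>"])
    show "integrable M (\<lambda>\<omega>. C * Z \<omega>)" using Z by simp
    show "(\<lambda>\<omega>. h (X \<omega>) * Z \<omega>) \<in> borel_measurable M" by measurable
    have "C \<ge> 0" using h_bound[of undefined] by simp
    then show "AE \<omega> in M. norm (h (X \<omega>) * Z \<omega>) \<le> norm (C * Z \<omega>)"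
      using h_bound by (auto intro!: AE_I2 simp: abs_mult mult_right_mono)
  qed
  have "(\<integral>\<omega>. h (X \<omega>) * Z \<omega> \<partial>M) = (\<integral>\<omega>. h (X \<omega>) * real_cond_exp M F Z \<omega> \<partial>M)"
    using real_cond_exp_intg(2)[OF hZ hX_F] by simp
  also have "\<dots> = (\<integral>\<omega>. h (X \<omega>) * g (X \<omega>) \<partial>M)"
    using is_cond_exp_fun_AE_real_cond_exp[OF X Z g] unfolding F_def[symmetric]
    by (intro integral_cong_AE) auto
  finally show ?thesis .
qed

lemma (in prob_space) is_cond_exp_fun_square_integrable:
  fixes X :: "'a \<Rightarrow> 'x::topological_space"
  assumes X: "X \<in> borel_measurable M" and g: "is_cond_exp_fun M X Z g"
    and Z: "Z \<in> borel_measurable M" "integrable M (\<lambda>\<omega>. (Z \<omega>)\<^sup>2)"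
  shows "integrable M (\<lambda>\<omega>. (g (X \<omega>))\<^sup>2)"
proof -
  define F where "F = vimage_algebra (space M) X borel"
  interpret finite_measure_subalgebra M F
    unfolding F_def by (rule finite_measure_subalgebra_vimage_algebra[OF X])
  have Z_int: "integrable M Z" using Z by (rule square_integrable_imp_integrable)
  have "g \<in> borel_measurable borel" using g unfolding is_cond_exp_fun_def by auto
  then have [measurable]: "(\<lambda>\<omega>. g (X \<omega>)) \<in> borel_measurable M" using X by measurable
  have ae: "AE \<omega> in M. real_cond_exp M F Z \<omega> = g (X \<omega>)"
    using is_cond_exp_fun_AE_real_cond_exp[OF X Z_int g] unfolding F_def .
  have "integrable M (\<lambda>\<omega>. (real_cond_exp M F Z \<omega>)\<^sup>2)"
    using integrable_convex_cond_exp[of Z UNIV 0 0 power2, OF Z_int _ _ _ convex_power2] Z(2) by auto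
  then show ?thesis by (rule integrable_cong_AE_imp) (use ae in auto)
qed

lemma (in prob_space) is_cond_exp_fun_AE_bounds:
  fixes X :: "'a \<Rightarrow> 'x::topological_space"
  assumes X: "X \<in> borel_measurable M" and g: "is_cond_exp_fun M X Z g"
    and Z: "Z \<in> borel_measurable M" "\<And>\<omega>. c \<le> Z \<omega> \<and> Z \<omega> \<le> d"
  shows "AE \<omega> in M. c \<le> g (X \<omega>) \<and> g (X \<omega>) \<le> d"
proof -
  define F where "F = vimage_algebra (space M) X borel"
  interpret finite_measure_subalgebra M F
    unfolding F_def by (rule finite_measure_subalgebra_vimage_algebra[OF X])
  have Z_int: "integrable M Z"
  proof (rule integrable_const_bound[where B="max \<bar>c\<bar> \<bar>d\<bar>"])
    have "\<bar>Z \<omega>\<bar> \<le> max \<bar>c\<bar> \<bar>d\<bar>" for \<omega>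
      using Z(2)[of \<omega>] by arith
    then show "AE \<omega> in M. norm (Z \<omega>) \<le> max \<bar>c\<bar> \<bar>d\<bar>" by simp
  qed (rule Z(1))
  have "AE \<omega> in M. c \<le> real_cond_exp M F Z \<omega>"
    by (rule real_cond_exp_ge_c[OF Z_int]) (use Z(2) in auto)
  moreover have "AE \<omega> in M. real_cond_exp M F Z \<omega> \<le> d"
    by (rule real_cond_exp_le_c[OF Z_int]) (use Z(2) in auto)
  moreover note is_cond_exp_fun_AE_real_cond_exp[OF X Z_int g]
  ultimately show ?thesis unfolding F_def[symmetric] by eventually_elim auto
qed

section \<open>The fair regression problem\<close>

lemma finite_grid_idx [simp]: "finite (grid_idx L)"
  by (simp add: grid_idx_def)

lemma grid_idx_ne_empty [simp]: "grid_idx L \<noteq> {}"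
  by (auto simp: grid_idx_def)

lemma grid_prediction_bounds:
  assumes "grid_prediction L \<pi>"
  shows "0 \<le> \<pi> x l" "\<pi> x l \<le> 1"
proof -
  have nonneg: "\<And>l. 0 \<le> \<pi> x l" and "(\<Sum>l\<in>grid_idx L. \<pi> x l) = 1"
    and "\<And>l. l \<notin> grid_idx L \<Longrightarrow> \<pi> x l = 0"
    using assms unfolding grid_prediction_def by auto
  show "0 \<le> \<pi> x l" by (rule nonneg)
  show "\<pi> x l \<le> 1"
  proof (cases "l \<in> grid_idx L")
    case True
    then have "\<pi> x l \<le> (\<Sum>l\<in>grid_idx L. \<pi> x l)" using nonneg by (intro member_le_sum) auto
    then show ?thesis using \<open>(\<Sum>l\<in>grid_idx L. \<pi> x l) = 1\<close> by simp
  qed (simp add: \<open>\<And>l. l \<notin> grid_idx L \<Longrightarrow> \<pi> x l = 0\<close>)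
qed

lemma abs_xlnx_le_1:
  fixes p :: real
  assumes "0 < p" "p \<le> 1"
  shows "\<bar>p * ln p\<bar> \<le> 1"
proof -
  have "ln (1 / p) \<le> 1 / p - 1" using assms by (intro ln_le_minus_one) auto
  then have "p * - ln p \<le> p * (1 / p - 1)" using assms by (intro mult_left_mono) (auto simp: ln_div)
  moreover have "p * ln p \<le> 0" using assms by (simp add: mult_nonneg_nonpos)
  ultimately show ?thesis using assms by (simp add: algebra_simps)
qed

lemma abs_negent_le:
  assumes "\<And>l. 0 \<le> \<mu> l" "\<And>l. \<mu> l \<le> 1"
  shows "\<bar>negent L \<mu>\<bar> \<le> card (grid_idx L)"
proof -
  have "\<bar>negent L \<mu>\<bar> \<le> (\<Sum>l\<in>grid_idx L. \<bar>if \<mu> l = 0 then 0 else \<mu> l * ln (\<mu> l)\<bar>)"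
    unfolding negent_def by (rule sum_abs)
  also have "\<dots> \<le> (\<Sum>l\<in>grid_idx L. 1)"
    using assms abs_xlnx_le_1 by (intro sum_mono) (simp add: less_le)
  finally show ?thesis by simp
qed

lemma pi_LV_eq_softmax:
  "l \<in> grid_idx L \<Longrightarrow>
    pi_LV M S \<tau> \<eta> B L K \<beta> \<Lambda> V x l = softmax \<beta> (grid_idx L) (\<lambda>l. score M S \<tau> \<eta> B L K \<Lambda> V l x) l"
  by (simp add: pi_LV_def softmax_def)

lemma entropic_value_cong:
  assumes "\<And>i. i \<in> I \<Longrightarrow> p i = q i"
  shows "entropic_value \<beta> I w p = entropic_value \<beta> I w q"
proof -
  have "(\<Sum>i\<in>I. p i * w i) = (\<Sum>i\<in>I. q i * w i)"
    and "(\<Sum>i\<in>I. if p i = 0 then 0 else p i * ln (p i)) = (\<Sum>i\<in>I. if q i = 0 then 0 else q i * ln (q i))"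
    using assms by (auto intro: sum.cong)
  then show ?thesis unfolding entropic_value_def by simp
qed

lemma sum_if_eq_mult:
  fixes c :: "'b::semiring_0"
  shows "finite A \<Longrightarrow> j \<in> A \<Longrightarrow> (\<Sum>i\<in>A. (if P \<and> i = j then c else 0) * f i) = (if P then c * f j else 0)"
  by (cases P) (simp_all add: if_distrib[of "\<lambda>x. x * _"] cong: if_cong)

locale fair_regression = prob_space M
  for M :: "'a measure" +
  fixes X :: "'a \<Rightarrow> 'x::topological_space" and S :: "'a \<Rightarrow> nat"
    and \<eta> :: "'x \<Rightarrow> real" and \<tau> :: "nat \<Rightarrow> 'x \<Rightarrow> real"
    and K L :: nat and B \<beta> :: real and \<epsilon> :: "nat \<Rightarrow> real"
  assumes X_measurable [measurable]: "X \<in> borel_measurable M"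
    and S_measurable [measurable]: "S \<in> measurable M (count_space UNIV)"
    and \<beta>_pos: "\<beta> > 0"
    and pS_pos: "\<And>s. s \<in> {1..K} \<Longrightarrow> pS M S s > 0"
    and \<eta>_measurable [measurable]: "\<eta> \<in> borel_measurable borel"
    and \<eta>_square_integrable: "integrable M (\<lambda>\<omega>. (\<eta> (X \<omega>))\<^sup>2)"
    and \<tau>_cond_exp: "\<And>s. s \<in> {1..K} \<Longrightarrow> is_cond_exp_fun M X (indicator {\<omega>. S \<omega> = s}) (\<tau> s)"
begin

abbreviation T :: "nat \<Rightarrow> 'a \<Rightarrow> real" where
  "T s \<omega> \<equiv> tfun M S \<tau> s (X \<omega>)"

abbreviation W :: "(int \<Rightarrow> nat \<Rightarrow> real) \<Rightarrow> (int \<Rightarrow> nat \<Rightarrow> real) \<Rightarrow> int \<Rightarrow> 'a \<Rightarrow> real" where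
  "W \<Lambda> V l \<omega> \<equiv> score M S \<tau> \<eta> B L K \<Lambda> V l (X \<omega>)"

abbreviation F :: "(int \<Rightarrow> nat \<Rightarrow> real) \<Rightarrow> (int \<Rightarrow> nat \<Rightarrow> real) \<Rightarrow> real" where
  "F \<Lambda> V \<equiv> Fobj M X S \<tau> \<eta> B L K \<beta> \<epsilon> \<Lambda> V"

abbreviation gibbs :: "(int \<Rightarrow> nat \<Rightarrow> real) \<Rightarrow> (int \<Rightarrow> nat \<Rightarrow> real) \<Rightarrow> 'x \<Rightarrow> int \<Rightarrow> real" where
  "gibbs \<Lambda> V \<equiv> pi_LV M S \<tau> \<eta> B L K \<beta> \<Lambda> V"

definition signed_unfair :: "('x \<Rightarrow> int \<Rightarrow> real) \<Rightarrow> int \<Rightarrow> nat \<Rightarrow> real" where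
  "signed_unfair \<pi> l s = (\<integral>\<omega>. \<pi> (X \<omega>) l * T s \<omega> \<partial>M)"

definition penalty :: "(int \<Rightarrow> nat \<Rightarrow> real) \<Rightarrow> (int \<Rightarrow> nat \<Rightarrow> real) \<Rightarrow> real" where
  "penalty \<Lambda> V = (\<Sum>l\<in>grid_idx L. \<Sum>s\<in>{1..K}. (\<Lambda> l s + V l s) * \<epsilon> s)"

lemma Fobj_eq:
  "Fobj M X S \<tau> \<eta> B L K \<beta> \<epsilon> \<Lambda> V = (\<integral>\<omega>. LSE \<beta> (grid_idx L) (\<lambda>l. W \<Lambda> V l \<omega>) \<partial>M) + penalty \<Lambda> V"
  unfolding Fobj_def penalty_def ..

lemma tfun_measurable:
  assumes "s \<in> {1..K}"
  shows "tfun M S \<tau> s \<in> borel_measurable borel"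
proof -
  have [measurable]: "\<tau> s \<in> borel_measurable borel"
    using \<tau>_cond_exp[OF assms] unfolding is_cond_exp_fun_def by simp
  show ?thesis unfolding tfun_def by measurable
qed

lemma indicator_S_measurable [measurable]:
  "(indicator {\<omega>. S \<omega> = s} :: 'a \<Rightarrow> real) \<in> borel_measurable M"
proof -
  have "(\<lambda>\<omega>. if S \<omega> = s then 1 else 0 :: real) \<in> borel_measurable M" by measurable
  then show ?thesis by (simp add: indicator_def[abs_def])
qed

lemma \<tau>_AE_bounds: "s \<in> {1..K} \<Longrightarrow> AE \<omega> in M. 0 \<le> \<tau> s (X \<omega>) \<and> \<tau> s (X \<omega>) \<le> 1"
  by (rule is_cond_exp_fun_AE_bounds[OF X_measurable \<tau>_cond_exp indicator_S_measurable])
    (simp_all add: indicator_def)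

lemma abs_tfun_le:
  assumes s: "s \<in> {1..K}"
  shows "AE \<omega> in M. \<bar>T s \<omega>\<bar> \<le> 1 + 1 / pS M S s"
  using \<tau>_AE_bounds[OF s]
proof eventually_elim
  case (elim \<omega>)
  then have "0 \<le> \<tau> s (X \<omega>) / pS M S s" "\<tau> s (X \<omega>) / pS M S s \<le> 1 / pS M S s"
    using pS_pos[OF s] by (auto simp: divide_right_mono)
  then show ?case unfolding tfun_def by linarith
qed

lemma integrable_tfun:
  assumes s: "s \<in> {1..K}"
  shows "integrable M (T s)"
proof (rule integrable_const_bound[where B="1 + 1 / pS M S s"])
  show "AE \<omega> in M. norm (T s \<omega>) \<le> 1 + 1 / pS M S s" using abs_tfun_le[OF s] by simp
  have [measurable]: "tfun M S \<tau> s \<in> borel_measurable borel" by (rule tfun_measurable[OF s])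
  show "T s \<in> borel_measurable M" by measurable
qed

lemma integrable_rfun: "integrable M (\<lambda>\<omega>. rfun \<eta> B L l (X \<omega>))"
proof -
  have [measurable]: "(\<lambda>\<omega>. \<eta> (X \<omega>)) \<in> borel_measurable M" by measurable
  have "integrable M (\<lambda>\<omega>. \<eta> (X \<omega>))"
    by (rule square_integrable_imp_integrable[OF _ \<eta>_square_integrable]) measurable
  then have "integrable M (\<lambda>\<omega>. (\<eta> (X \<omega>))\<^sup>2 + (grid_pt B L l)\<^sup>2 - 2 * \<eta> (X \<omega>) * grid_pt B L l)"
    by (intro Bochner_Integration.integrable_add Bochner_Integration.integrable_diff
        integrable_mult_left integrable_mult_right \<eta>_square_integrable integrable_const)
  then show ?thesis unfolding rfun_def by (simp add: power2_diff)
qed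

lemma score_measurable [measurable]: "score M S \<tau> \<eta> B L K \<Lambda> V l \<in> borel_measurable borel"
proof -
  have [measurable]: "(\<lambda>x. \<Sum>s\<in>{1..K}. (\<Lambda> l s - V l s) * tfun M S \<tau> s x) \<in> borel_measurable borel"
  proof (rule borel_measurable_sum)
    fix s assume "s \<in> {1..K}"
    note tfun_measurable[OF this, measurable]
    show "(\<lambda>x. (\<Lambda> l s - V l s) * tfun M S \<tau> s x) \<in> borel_measurable borel" by measurable
  qed
  show ?thesis unfolding score_def[abs_def] rfun_def by measurable
qed

lemma integrable_score: "integrable M (W \<Lambda> V l)"
  unfolding score_def using integrable_rfun integrable_tfun
  by (intro Bochner_Integration.integrable_diff integrable_sum integrable_mult_right) auto

lemma grid_prediction_pi_LV: "grid_prediction L (pi_LV M S \<tau> \<eta> B L K \<beta> \<Lambda> V)"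
  unfolding grid_prediction_def
proof (intro conjI allI impI)
  fix x l
  show "0 \<le> pi_LV M S \<tau> \<eta> B L K \<beta> \<Lambda> V x l"
    unfolding pi_LV_def by (auto intro!: divide_nonneg_nonneg sum_nonneg)
  show "l \<notin> grid_idx L \<Longrightarrow> pi_LV M S \<tau> \<eta> B L K \<beta> \<Lambda> V x l = 0"
    by (simp add: pi_LV_def)
  show "(\<Sum>l\<in>grid_idx L. pi_LV M S \<tau> \<eta> B L K \<beta> \<Lambda> V x l) = 1"
    using sum_softmax[of "grid_idx L"] by (simp add: pi_LV_eq_softmax)
  show "(\<lambda>x. pi_LV M S \<tau> \<eta> B L K \<beta> \<Lambda> V x l) \<in> borel_measurable borel"
    unfolding pi_LV_def by (cases "l \<in> grid_idx L") simp_all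
qed

lemma grid_prediction_measurable [measurable]:
  assumes "grid_prediction L \<pi>"
  shows "(\<lambda>\<omega>. \<pi> (X \<omega>) l) \<in> borel_measurable M"
proof -
  have [measurable]: "(\<lambda>x. \<pi> x l) \<in> borel_measurable borel"
    using assms unfolding grid_prediction_def by simp
  show ?thesis by measurable
qed

lemma integrable_grid_prediction_mult:
  assumes \<pi>: "grid_prediction L \<pi>" and f: "integrable M f"
  shows "integrable M (\<lambda>\<omega>. \<pi> (X \<omega>) l * f \<omega>)"
proof (rule Bochner_Integration.integrable_bound[OF f])
  show "(\<lambda>\<omega>. \<pi> (X \<omega>) l * f \<omega>) \<in> borel_measurable M"
    using grid_prediction_measurable[OF \<pi>] f by measurable
  show "AE \<omega> in M. norm (\<pi> (X \<omega>) l * f \<omega>) \<le> norm (f \<omega>)"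
    using grid_prediction_bounds[OF \<pi>] by (auto simp: abs_mult mult_left_le_one_le)
qed

lemma integrable_negent:
  assumes \<pi>: "grid_prediction L \<pi>"
  shows "integrable M (\<lambda>\<omega>. negent L (\<pi> (X \<omega>)))"
proof (rule integrable_const_bound[where B="card (grid_idx L)"])
  show "AE \<omega> in M. norm (negent L (\<pi> (X \<omega>))) \<le> card (grid_idx L)"
    using abs_negent_le grid_prediction_bounds[OF \<pi>] by auto
  show "(\<lambda>\<omega>. negent L (\<pi> (X \<omega>))) \<in> borel_measurable M"
    unfolding negent_def using grid_prediction_measurable[OF \<pi>] by measurable
qed

lemma unfair_eq_abs_signed_unfair:
  assumes \<pi>: "grid_prediction L \<pi>" and s: "s \<in> {1..K}"
  shows "unfair M X S \<pi> l s = \<bar>signed_unfair \<pi> l s\<bar>"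
proof -
  define p where "p = pS M S s"
  have "p > 0" unfolding p_def using pS_pos[OF s] .
  have [measurable]: "(\<lambda>x. \<pi> x l) \<in> borel_measurable borel"
    using \<pi> unfolding grid_prediction_def by simp
  have ind_int: "integrable M (indicator {\<omega>. S \<omega> = s} :: 'a \<Rightarrow> real)"
    by (rule integrable_const_bound[where B=1]) auto
  \<comment> \<open>Conditioning on \<open>X\<close> replaces the indicator of \<open>{S = s}\<close> by \<open>\<tau>\<^sub>s(X)\<close>.\<close>
  have "(\<integral>\<omega>. \<pi> (X \<omega>) l * indicator {\<omega>. S \<omega> = s} \<omega> \<partial>M) = (\<integral>\<omega>. \<pi> (X \<omega>) l * \<tau> s (X \<omega>) \<partial>M)"
    using grid_prediction_bounds[OF \<pi>]
    by (intro integral_mult_is_cond_exp_fun[OF X_measurable ind_int \<tau>_cond_exp[OF s], where C=1]) auto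
  also have "\<dots> = p * (\<integral>\<omega>. \<pi> (X \<omega>) l - \<pi> (X \<omega>) l * T s \<omega> \<partial>M)"
    using \<open>p > 0\<close> by (simp add: tfun_def p_def[symmetric] field_simps)
  also have "\<dots> = p * ((\<integral>\<omega>. \<pi> (X \<omega>) l \<partial>M) - signed_unfair \<pi> l s)"
    using integrable_grid_prediction_mult[OF \<pi> integrable_const[of 1]]
      integrable_grid_prediction_mult[OF \<pi> integrable_tfun[OF s]]
    by (simp add: signed_unfair_def)
  finally show ?thesis
    using \<open>p > 0\<close> unfolding unfair_def p_def[symmetric] by (simp add: abs_minus_commute)
qed

lemma integrable_entropic_value:
  assumes \<pi>: "grid_prediction L \<pi>"
  shows "integrable M (\<lambda>\<omega>. entropic_value \<beta> (grid_idx L) (\<lambda>l. W \<Lambda> V l \<omega>) (\<pi> (X \<omega>)))"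
  unfolding entropic_value_def negent_def[symmetric]
  using integrable_grid_prediction_mult[OF \<pi> integrable_score] integrable_negent[OF \<pi>] by auto

lemma integrable_LSE_score: "integrable M (\<lambda>\<omega>. LSE \<beta> (grid_idx L) (\<lambda>l. W \<Lambda> V l \<omega>))"
  using integrable_LSE[OF finite_grid_idx grid_idx_ne_empty \<beta>_pos integrable_score] .

text \<open>Because \<open>score = \<langle>\<lambda> - \<nu>, t\<rangle> - r\<close>, the risk term is absorbed into the entropic value of
  the score, leaving the Lagrangian term of the constraints.\<close>
lemma risk_beta_eq_lagrangian:
  assumes \<pi>: "grid_prediction L \<pi>"
  shows "risk_beta M X \<eta> B L \<beta> \<pi> =
    (\<Sum>l\<in>grid_idx L. \<Sum>s\<in>{1..K}. (\<Lambda> l s - V l s) * signed_unfair \<pi> l s)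
    - (\<integral>\<omega>. entropic_value \<beta> (grid_idx L) (\<lambda>l. W \<Lambda> V l \<omega>) (\<pi> (X \<omega>)) \<partial>M)"
proof -
  have pointwise: "(\<Sum>l\<in>grid_idx L. \<pi> (X \<omega>) l * rfun \<eta> B L l (X \<omega>)) + negent L (\<pi> (X \<omega>)) / \<beta>
      = (\<Sum>l\<in>grid_idx L. \<Sum>s\<in>{1..K}. (\<Lambda> l s - V l s) * (\<pi> (X \<omega>) l * T s \<omega>))
        - entropic_value \<beta> (grid_idx L) (\<lambda>l. W \<Lambda> V l \<omega>) (\<pi> (X \<omega>))" for \<omega>
    unfolding entropic_value_def negent_def[symmetric] score_def
    by (simp add: right_diff_distrib sum_subtractf sum_distrib_left sum.distrib algebra_simps)
  have int_risk: "integrable M (\<lambda>\<omega>. \<Sum>l\<in>grid_idx L. \<pi> (X \<omega>) l * rfun \<eta> B L l (X \<omega>))"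
    using integrable_grid_prediction_mult[OF \<pi> integrable_rfun] by auto
  have int_\<pi>T: "integrable M (\<lambda>\<omega>. \<pi> (X \<omega>) l * T s \<omega>)" if "s \<in> {1..K}" for l s
    using integrable_grid_prediction_mult[OF \<pi> integrable_tfun[OF that]] .
  have int_lagrangian:
    "integrable M (\<lambda>\<omega>. \<Sum>l\<in>grid_idx L. \<Sum>s\<in>{1..K}. (\<Lambda> l s - V l s) * (\<pi> (X \<omega>) l * T s \<omega>))"
    using int_\<pi>T by (intro Bochner_Integration.integrable_sum integrable_mult_right) auto
  have "(\<integral>\<omega>. (\<Sum>l\<in>grid_idx L. \<Sum>s\<in>{1..K}. (\<Lambda> l s - V l s) * (\<pi> (X \<omega>) l * T s \<omega>)) \<partial>M)
      = (\<Sum>l\<in>grid_idx L. \<integral>\<omega>. (\<Sum>s\<in>{1..K}. (\<Lambda> l s - V l s) * (\<pi> (X \<omega>) l * T s \<omega>)) \<partial>M)"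
    using int_\<pi>T by (intro Bochner_Integration.integral_sum Bochner_Integration.integrable_sum integrable_mult_right) auto
  also have "\<dots> = (\<Sum>l\<in>grid_idx L. \<Sum>s\<in>{1..K}. (\<Lambda> l s - V l s) * signed_unfair \<pi> l s)"
    using int_\<pi>T unfolding signed_unfair_def
    by (intro sum.cong refl) (simp add: Bochner_Integration.integral_sum)
  finally have lagrangian: "(\<integral>\<omega>. (\<Sum>l\<in>grid_idx L. \<Sum>s\<in>{1..K}. (\<Lambda> l s - V l s) * (\<pi> (X \<omega>) l * T s \<omega>)) \<partial>M)
      = (\<Sum>l\<in>grid_idx L. \<Sum>s\<in>{1..K}. (\<Lambda> l s - V l s) * signed_unfair \<pi> l s)" .
  have "risk_beta M X \<eta> B L \<beta> \<pi>
      = (\<integral>\<omega>. (\<Sum>l\<in>grid_idx L. \<pi> (X \<omega>) l * rfun \<eta> B L l (X \<omega>)) + negent L (\<pi> (X \<omega>)) / \<beta> \<partial>M)"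
    unfolding risk_beta_def risk_def using int_risk integrable_negent[OF \<pi>] by simp
  also have "\<dots> = (\<integral>\<omega>. (\<Sum>l\<in>grid_idx L. \<Sum>s\<in>{1..K}. (\<Lambda> l s - V l s) * (\<pi> (X \<omega>) l * T s \<omega>))
      - entropic_value \<beta> (grid_idx L) (\<lambda>l. W \<Lambda> V l \<omega>) (\<pi> (X \<omega>)) \<partial>M)"
    unfolding pointwise ..
  also have "\<dots> = (\<Sum>l\<in>grid_idx L. \<Sum>s\<in>{1..K}. (\<Lambda> l s - V l s) * signed_unfair \<pi> l s)
      - (\<integral>\<omega>. entropic_value \<beta> (grid_idx L) (\<lambda>l. W \<Lambda> V l \<omega>) (\<pi> (X \<omega>)) \<partial>M)"
    using Bochner_Integration.integral_diff[OF int_lagrangian integrable_entropic_value[OF \<pi>]] lagrangian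
    by simp
  finally show ?thesis .
qed

lemma lagrangian_dual_le_risk_beta:
  assumes \<pi>: "grid_prediction L \<pi>"
  shows "(\<Sum>l\<in>grid_idx L. \<Sum>s\<in>{1..K}. (\<Lambda> l s - V l s) * signed_unfair \<pi> l s)
      - (\<integral>\<omega>. LSE \<beta> (grid_idx L) (\<lambda>l. W \<Lambda> V l \<omega>) \<partial>M)
    \<le> risk_beta M X \<eta> B L \<beta> \<pi>"
proof -
  have "(\<integral>\<omega>. entropic_value \<beta> (grid_idx L) (\<lambda>l. W \<Lambda> V l \<omega>) (\<pi> (X \<omega>)) \<partial>M)
      \<le> (\<integral>\<omega>. LSE \<beta> (grid_idx L) (\<lambda>l. W \<Lambda> V l \<omega>) \<partial>M)"
  proof (rule integral_mono[OF integrable_entropic_value[OF \<pi>] integrable_LSE_score])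
    fix \<omega>
    show "entropic_value \<beta> (grid_idx L) (\<lambda>l. W \<Lambda> V l \<omega>) (\<pi> (X \<omega>)) \<le> LSE \<beta> (grid_idx L) (\<lambda>l. W \<Lambda> V l \<omega>)"
      using \<pi> grid_prediction_bounds[OF \<pi>] unfolding grid_prediction_def
      by (intro entropic_value_le_LSE[OF finite_grid_idx \<beta>_pos]) auto
  qed
  then show ?thesis using risk_beta_eq_lagrangian[OF \<pi>, of \<Lambda> V] by simp
qed

lemma risk_beta_gibbs_eq:
  "risk_beta M X \<eta> B L \<beta> (gibbs \<Lambda> V) =
    (\<Sum>l\<in>grid_idx L. \<Sum>s\<in>{1..K}. (\<Lambda> l s - V l s) * signed_unfair (gibbs \<Lambda> V) l s)
    - (\<integral>\<omega>. LSE \<beta> (grid_idx L) (\<lambda>l. W \<Lambda> V l \<omega>) \<partial>M)"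
proof -
  have "entropic_value \<beta> (grid_idx L) (\<lambda>l. W \<Lambda> V l \<omega>) (gibbs \<Lambda> V (X \<omega>))
      = LSE \<beta> (grid_idx L) (\<lambda>l. W \<Lambda> V l \<omega>)" for \<omega>
    using entropic_value_softmax[OF finite_grid_idx grid_idx_ne_empty \<beta>_pos]
    by (subst entropic_value_cong[OF pi_LV_eq_softmax]) auto
  then show ?thesis using risk_beta_eq_lagrangian[OF grid_prediction_pi_LV[of \<Lambda> V], of \<Lambda> V] by simp
qed

lemma neg_Fobj_le_risk_beta:
  assumes \<pi>: "fair_feasible M X S L K \<epsilon> \<pi>" and "nonneg_mat L K \<Lambda>" "nonneg_mat L K V"
  shows "- F \<Lambda> V \<le> risk_beta M X \<eta> B L \<beta> \<pi>"
proof -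
  have gp: "grid_prediction L \<pi>" using \<pi> unfolding fair_feasible_def by simp
  have "- ((\<Lambda> l s + V l s) * \<epsilon> s) \<le> (\<Lambda> l s - V l s) * signed_unfair \<pi> l s"
    if l: "l \<in> grid_idx L" and s: "s \<in> {1..K}" for l s
  proof -
    have "unfair M X S \<pi> l s \<le> \<epsilon> s" using \<pi> l s unfolding fair_feasible_def by blast
    then have "\<bar>signed_unfair \<pi> l s\<bar> \<le> \<epsilon> s" unfolding unfair_eq_abs_signed_unfair[OF gp s] .
    moreover have "0 \<le> \<Lambda> l s" "0 \<le> V l s" using assms(2,3) l s unfolding nonneg_mat_def by auto
    ultimately show ?thesis
      using mult_left_mono[of "- \<epsilon> s" "signed_unfair \<pi> l s" "\<Lambda> l s"]
        mult_left_mono[of "signed_unfair \<pi> l s" "\<epsilon> s" "V l s"]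
      by (simp add: abs_le_iff algebra_simps)
  qed
  then have "- penalty \<Lambda> V \<le> (\<Sum>l\<in>grid_idx L. \<Sum>s\<in>{1..K}. (\<Lambda> l s - V l s) * signed_unfair \<pi> l s)"
    unfolding penalty_def sum_negf[symmetric] by (intro sum_mono) auto
  then show ?thesis using lagrangian_dual_le_risk_beta[OF gp, of \<Lambda> V] unfolding Fobj_eq by simp
qed

lemma Fobj_shift_le:
  assumes l0: "l0 \<in> grid_idx L" and s0: "s0 \<in> {1..K}"
    and small: "\<bar>h - g\<bar> * \<beta> * (1 + 1 / pS M S s0) \<le> 1"
  shows "F (\<lambda>l s. \<Lambda> l s + (if l = l0 \<and> s = s0 then h else 0))
           (\<lambda>l s. V l s + (if l = l0 \<and> s = s0 then g else 0))
    \<le> F \<Lambda> V + (h + g) * \<epsilon> s0 + (h - g) * signed_unfair (gibbs \<Lambda> V) l0 s0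
      + \<beta> * (1 + 1 / pS M S s0)\<^sup>2 * (h - g)\<^sup>2"
proof -
  define \<Lambda>' where "\<Lambda>' = (\<lambda>l s. \<Lambda> l s + (if l = l0 \<and> s = s0 then h else 0))"
  define V' where "V' = (\<lambda>l s. V l s + (if l = l0 \<and> s = s0 then g else 0))"
  have score: "W \<Lambda>' V' l \<omega> = W \<Lambda> V l \<omega> + (if l = l0 then (h - g) * T s0 \<omega> else 0)" for l \<omega>
  proof -
    have "\<Lambda>' l s - V' l s = (\<Lambda> l s - V l s) + (if l = l0 \<and> s = s0 then h - g else 0)" for s
      unfolding \<Lambda>'_def V'_def by simp
    then show ?thesis
      using sum_if_eq_mult[OF _ s0, of "l = l0" "h - g" "\<lambda>s. tfun M S \<tau> s (X \<omega>)"]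
      unfolding score_def by (simp add: distrib_right sum.distrib)
  qed
  have penalty: "penalty \<Lambda>' V' = penalty \<Lambda> V + (h + g) * \<epsilon> s0"
  proof -
    have "\<Lambda>' l s + V' l s = (\<Lambda> l s + V l s) + (if l = l0 \<and> s = s0 then h + g else 0)" for l s
      unfolding \<Lambda>'_def V'_def by simp
    then show ?thesis
      using sum_if_eq_mult[OF _ s0, of _ "h + g" \<epsilon>] l0
      unfolding penalty_def by (simp add: distrib_right sum.distrib)
  qed
  have [measurable]: "tfun M S \<tau> s0 \<in> borel_measurable borel" by (rule tfun_measurable[OF s0])
  have "(\<integral>\<omega>. LSE \<beta> (grid_idx L) (\<lambda>l. W \<Lambda>' V' l \<omega>) \<partial>M)
      \<le> (\<integral>\<omega>. LSE \<beta> (grid_idx L) (\<lambda>l. W \<Lambda> V l \<omega>) \<partial>M)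
        + (h - g) * (\<integral>\<omega>. softmax \<beta> (grid_idx L) (\<lambda>l. W \<Lambda> V l \<omega>) l0 * T s0 \<omega> \<partial>M)
        + \<beta> * (1 + 1 / pS M S s0)\<^sup>2 * (h - g)\<^sup>2"
    unfolding score
    by (rule integral_LSE_perturb_le[OF finite_grid_idx l0 \<beta>_pos integrable_score _ abs_tfun_le[OF s0] small])
      measurable
  also have "(\<integral>\<omega>. softmax \<beta> (grid_idx L) (\<lambda>l. W \<Lambda> V l \<omega>) l0 * T s0 \<omega> \<partial>M)
      = signed_unfair (gibbs \<Lambda> V) l0 s0"
    unfolding signed_unfair_def pi_LV_eq_softmax[OF l0] ..
  finally show ?thesis
    unfolding Fobj_eq \<Lambda>'_def[symmetric] V'_def[symmetric] penalty by simp
qed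

lemma minimizer_complementary_slackness:
  assumes nonneg: "nonneg_mat L K \<Lambda>" "nonneg_mat L K V"
    and min: "\<And>\<Lambda>' V'. nonneg_mat L K \<Lambda>' \<Longrightarrow> nonneg_mat L K V' \<Longrightarrow> F \<Lambda> V \<le> F \<Lambda>' V'"
    and l: "l \<in> grid_idx L" and s: "s \<in> {1..K}"
  shows "0 \<le> \<epsilon> s + signed_unfair (gibbs \<Lambda> V) l s \<and> \<Lambda> l s * (\<epsilon> s + signed_unfair (gibbs \<Lambda> V) l s) = 0"
    and "0 \<le> \<epsilon> s - signed_unfair (gibbs \<Lambda> V) l s \<and> V l s * (\<epsilon> s - signed_unfair (gibbs \<Lambda> V) l s) = 0"
proof -
  define I where "I = signed_unfair (gibbs \<Lambda> V) l s"
  define C where "C = 1 + 1 / pS M S s"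
  define \<delta> where "\<delta> = 1 / (\<beta> * C + 1)"
  have "\<beta> * C \<ge> 0" unfolding C_def using \<beta>_pos pS_pos[OF s] by simp
  then have "\<delta> > 0" unfolding \<delta>_def by simp
  have small: "\<bar>h\<bar> * \<beta> * C \<le> 1" if "\<bar>h\<bar> \<le> \<delta>" for h
  proof -
    have "\<bar>h\<bar> * (\<beta> * C) \<le> \<delta> * (\<beta> * C)" using that \<open>\<beta> * C \<ge> 0\<close> by (intro mult_right_mono)
    also have "\<dots> \<le> 1" unfolding \<delta>_def using \<open>\<beta> * C \<ge> 0\<close> by (simp add: field_simps)
    finally show ?thesis by (simp add: mult.assoc)
  qed
  have shift_nonneg: "nonneg_mat L K (\<lambda>l' s'. \<Lambda>' l' s' + (if l' = l \<and> s' = s then h else 0))"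
    if "nonneg_mat L K \<Lambda>'" "- \<Lambda>' l s \<le> h" for \<Lambda>' h
    using that unfolding nonneg_mat_def by auto
  have no_shift: "(\<lambda>l' s'. \<Lambda>' l' s' + (if l' = l \<and> s' = s then 0 else 0)) = \<Lambda>'" for \<Lambda>' :: "int \<Rightarrow> nat \<Rightarrow> real"
    by simp
  have "0 \<le> \<Lambda> l s" "0 \<le> V l s" using nonneg l s unfolding nonneg_mat_def by auto
  show "0 \<le> \<epsilon> s + I \<and> \<Lambda> l s * (\<epsilon> s + I) = 0"
  proof (rule complementary_slackness_of_quadratic_perturbation[OF \<open>\<delta> > 0\<close> _ \<open>0 \<le> \<Lambda> l s\<close>])
    show "0 \<le> \<beta> * C\<^sup>2" using \<beta>_pos by simp
    fix h assume "\<bar>h\<bar> \<le> \<delta>" "- \<Lambda> l s \<le> h"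
    have "F \<Lambda> V \<le> F (\<lambda>l' s'. \<Lambda> l' s' + (if l' = l \<and> s' = s then h else 0)) V"
      using min[OF shift_nonneg[OF nonneg(1) \<open>- \<Lambda> l s \<le> h\<close>] nonneg(2)] .
    also have "\<dots> \<le> F \<Lambda> V + h * \<epsilon> s + h * I + \<beta> * C\<^sup>2 * h\<^sup>2"
      using Fobj_shift_le[OF l s, of h 0 \<Lambda> V] small[OF \<open>\<bar>h\<bar> \<le> \<delta>\<close>]
      unfolding no_shift I_def C_def by simp
    finally show "0 \<le> h * (\<epsilon> s + I) + h\<^sup>2 * (\<beta> * C\<^sup>2)" by (simp add: algebra_simps)
  qed
  show "0 \<le> \<epsilon> s - I \<and> V l s * (\<epsilon> s - I) = 0"
  proof (rule complementary_slackness_of_quadratic_perturbation[OF \<open>\<delta> > 0\<close> _ \<open>0 \<le> V l s\<close>])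
    show "0 \<le> \<beta> * C\<^sup>2" using \<beta>_pos by simp
    fix g assume "\<bar>g\<bar> \<le> \<delta>" "- V l s \<le> g"
    have "F \<Lambda> V \<le> F \<Lambda> (\<lambda>l' s'. V l' s' + (if l' = l \<and> s' = s then g else 0))"
      using min[OF nonneg(1) shift_nonneg[OF nonneg(2) \<open>- V l s \<le> g\<close>]] .
    also have "\<dots> \<le> F \<Lambda> V + g * \<epsilon> s - g * I + \<beta> * C\<^sup>2 * g\<^sup>2"
      using Fobj_shift_le[OF l s, of 0 g \<Lambda> V] small[OF \<open>\<bar>g\<bar> \<le> \<delta>\<close>]
      unfolding no_shift I_def C_def by simp
    finally show "0 \<le> g * (\<epsilon> s - I) + g\<^sup>2 * (\<beta> * C\<^sup>2)" by (simp add: algebra_simps)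
  qed
qed

lemma risk_beta_gibbs_eq_neg_Fobj:
  assumes "\<And>l s. l \<in> grid_idx L \<Longrightarrow> s \<in> {1..K} \<Longrightarrow>
      \<Lambda> l s * (\<epsilon> s + signed_unfair (gibbs \<Lambda> V) l s) = 0 \<and> V l s * (\<epsilon> s - signed_unfair (gibbs \<Lambda> V) l s) = 0"
  shows "risk_beta M X \<eta> B L \<beta> (gibbs \<Lambda> V) = - F \<Lambda> V"
proof -
  have "(\<Lambda> l s - V l s) * signed_unfair (gibbs \<Lambda> V) l s = - ((\<Lambda> l s + V l s) * \<epsilon> s)"
    if "l \<in> grid_idx L" "s \<in> {1..K}" for l s
    using assms[OF that] unfolding distrib_left right_diff_distrib distrib_right left_diff_distrib
    by linarith
  then have "(\<Sum>l\<in>grid_idx L. \<Sum>s\<in>{1..K}. (\<Lambda> l s - V l s) * signed_unfair (gibbs \<Lambda> V) l s) = - penalty \<Lambda> V"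
    unfolding penalty_def sum_negf[symmetric] by (intro sum.cong refl) auto
  then show ?thesis unfolding risk_beta_gibbs_eq Fobj_eq by simp
qed

end

theorem lemma3p1:
  fixes M :: "'a measure" and X :: "'a \<Rightarrow> real ^ 'd" and S :: "'a \<Rightarrow> nat" and Y :: "'a \<Rightarrow> real"
    and \<eta> :: "real ^ 'd \<Rightarrow> real" and \<tau> :: "nat \<Rightarrow> real ^ 'd \<Rightarrow> real"
    and K L :: nat and B \<beta> :: real and \<epsilon> :: "nat \<Rightarrow> real"
    and \<Lambda>s Vs :: "int \<Rightarrow> nat \<Rightarrow> real"
  assumes "prob_space M"
    and "K \<ge> 2" and "L \<ge> 1" and "B > 0" and "\<beta> > 0"
    and "\<forall>s\<in>{1..K}. 0 \<le> \<epsilon> s \<and> \<epsilon> s \<le> 1"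
    and "X \<in> borel_measurable M" and "S \<in> measurable M (count_space UNIV)"
    and "\<forall>\<omega>\<in>space M. S \<omega> \<in> {1..K}"
    and "Y \<in> borel_measurable M" and "integrable M (\<lambda>\<omega>. (Y \<omega>)\<^sup>2)"
    and "\<forall>s\<in>{1..K}. pS M S s > 0"
    and "is_cond_exp_fun M X Y \<eta>"
    and "\<forall>s\<in>{1..K}. is_cond_exp_fun M X (\<lambda>\<omega>. indicator {\<omega>. S \<omega> = s} \<omega>) (\<tau> s)"
    and "nonneg_mat L K \<Lambda>s" and "nonneg_mat L K Vs"
    and "\<forall>\<Lambda> V. nonneg_mat L K \<Lambda> \<and> nonneg_mat L K V \<longrightarrow>
           Fobj M X S \<tau> \<eta> B L K \<beta> \<epsilon> \<Lambda>s Vs \<le> Fobj M X S \<tau> \<eta> B L K \<beta> \<epsilon> \<Lambda> V"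
  shows "fair_feasible M X S L K \<epsilon> (pi_LV M S \<tau> \<eta> B L K \<beta> \<Lambda>s Vs) \<and>
         (\<forall>\<pi>. fair_feasible M X S L K \<epsilon> \<pi> \<longrightarrow>
            risk_beta M X \<eta> B L \<beta> (pi_LV M S \<tau> \<eta> B L K \<beta> \<Lambda>s Vs) \<le> risk_beta M X \<eta> B L \<beta> \<pi>)"
proof -
  interpret prob_space M by fact
  have "\<eta> \<in> borel_measurable borel" using assms(13) unfolding is_cond_exp_fun_def by simp
  moreover have "integrable M (\<lambda>\<omega>. (\<eta> (X \<omega>))\<^sup>2)"
    using is_cond_exp_fun_square_integrable[OF assms(7,13,10,11)] .
  ultimately interpret fair_regression M X S \<eta> \<tau> K L B \<beta> \<epsilon>
    using assms by unfold_locales auto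
  have slack: "0 \<le> \<epsilon> s + signed_unfair (gibbs \<Lambda>s Vs) l s \<and> \<Lambda>s l s * (\<epsilon> s + signed_unfair (gibbs \<Lambda>s Vs) l s) = 0"
    "0 \<le> \<epsilon> s - signed_unfair (gibbs \<Lambda>s Vs) l s \<and> Vs l s * (\<epsilon> s - signed_unfair (gibbs \<Lambda>s Vs) l s) = 0"
    if "l \<in> grid_idx L" "s \<in> {1..K}" for l s
    using minimizer_complementary_slackness[OF assms(15,16) _ that] assms(17) by blast+
  have "fair_feasible M X S L K \<epsilon> (gibbs \<Lambda>s Vs)"
    unfolding fair_feasible_def
  proof (intro conjI ballI grid_prediction_pi_LV)
    fix l s assume "l \<in> grid_idx L" "s \<in> {1..K}"
    then show "unfair M X S (gibbs \<Lambda>s Vs) l s \<le> \<epsilon> s"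
      using conjunct1[OF slack(1)] conjunct1[OF slack(2)]
      unfolding unfair_eq_abs_signed_unfair[OF grid_prediction_pi_LV \<open>s \<in> {1..K}\<close>] by fastforce
  qed
  moreover have "risk_beta M X \<eta> B L \<beta> (gibbs \<Lambda>s Vs) \<le> risk_beta M X \<eta> B L \<beta> \<pi>"
    if "fair_feasible M X S L K \<epsilon> \<pi>" for \<pi>
    using risk_beta_gibbs_eq_neg_Fobj[of \<Lambda>s Vs] slack neg_Fobj_le_risk_beta[OF that assms(15,16)]
    by simp
  ultimately show ?thesis by blast
qed

end
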